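(* For a semigroup $S$ the following are equivalent: (i) $S$ is intra-regular; (ii) $\underline{A}\cap\underline{B}\subseteq\underline{A}\circ\underline{B}$ for every IF left ideal $A=(\mu_A,\nu_A)$ and every IF right ideal $B=(\mu_B,\nu_B)$ of $S$.
   Context: A semigroup $S$ is intra-regular if for every $x\in S$ there are $a,b\in S$ with $x=ax^2b$. An intuitionistic fuzzy (IF) subset of $S$ is a pair $A=(\mu_A,\nu_A)$ of functions $S\to[0,1]$ with $\mu_A(x)+\nu_A(x)\le1$ for all $x$. $A$ is an IF right (resp. left) ideal of $S$ if $\mu_A(xy)\ge\mu_A(x)$ and $\nu_A(xy)\le\nu_A(x)$ (resp. $\mu_A(xy)\ge\mu_A(y)$ and $\nu_A(xy)\le\nu_A(y)$) for all $x,y\in S$. For $x\in S$ and $\alpha,\beta\in[0,1]$ with $\alpha+\beta\le1$, the IF point $x_{(\alpha,\beta)}$ is the IF subset of $S$ with value $(\alpha,\beta)$ at $x$ and $(0,1)$ elsewhere (so all points $x_{(0,1)}$ coincide). $\underline{S}$ is the set of all IF points of $S$; it is a semigroup under $x_{(\alpha,\beta)}\circ y_{(\gamma,\delta)}=(xy)_{(\min(\alpha,\gamma),\max(\beta,\delta))}$. For an IF subset $A$, $\underline{A}=\{x_{(\alpha,\beta)}\in\underline{S}:\mu_A(x)\ge\alpha,\ \nu_A(x)\le\beta\}$. For subsets $X,Y\subseteq\underline{S}$, $X\circ Y=\{p\circ q:p\in X,q\in Y\}$. *)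

theory Defs
  imports Complex_Main
begin

definition intra_regular :: "'a::semigroup_mult itself \<Rightarrow> bool" where
  "intra_regular _ \<longleftrightarrow> (\<forall>x::'a. \<exists>a b. x = a * (x * x) * b)"

definition if_subset :: "('a \<Rightarrow> real) \<Rightarrow> ('a \<Rightarrow> real) \<Rightarrow> bool" where
  "if_subset \<mu> \<nu> \<longleftrightarrow> (\<forall>x. 0 \<le> \<mu> x \<and> \<mu> x \<le> 1 \<and> 0 \<le> \<nu> x \<and> \<nu> x \<le> 1 \<and> \<mu> x + \<nu> x \<le> 1)"

definition if_left_ideal :: "('a::semigroup_mult \<Rightarrow> real) \<Rightarrow> ('a \<Rightarrow> real) \<Rightarrow> bool" where
  "if_left_ideal \<mu> \<nu> \<longleftrightarrow> if_subset \<mu> \<nu> \<and> (\<forall>x y. \<mu> (x * y) \<ge> \<mu> y \<and> \<nu> (x * y) \<le> \<nu> y)"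

definition if_right_ideal :: "('a::semigroup_mult \<Rightarrow> real) \<Rightarrow> ('a \<Rightarrow> real) \<Rightarrow> bool" where
  "if_right_ideal \<mu> \<nu> \<longleftrightarrow> if_subset \<mu> \<nu> \<and> (\<forall>x y. \<mu> (x * y) \<ge> \<mu> x \<and> \<nu> (x * y) \<le> \<nu> x)"

definition if_param :: "real \<Rightarrow> real \<Rightarrow> bool" where
  "if_param \<alpha> \<beta> \<longleftrightarrow> 0 \<le> \<alpha> \<and> \<alpha> \<le> 1 \<and> 0 \<le> \<beta> \<and> \<beta> \<le> 1 \<and> \<alpha> + \<beta> \<le> 1"

text \<open>The IF point x_(alpha,beta), represented as the IF subset it is
  (pair of values at each element); hence all points x_(0,1) coincide.\<close>
definition ifpoint :: "'a \<Rightarrow> real \<Rightarrow> real \<Rightarrow> ('a \<Rightarrow> real \<times> real)" where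
  "ifpoint x \<alpha> \<beta> = (\<lambda>z. if z = x then (\<alpha>, \<beta>) else (0, 1))"

definition ifpoints :: "('a \<Rightarrow> real \<times> real) set" where
  "ifpoints = {ifpoint x \<alpha> \<beta> | x \<alpha> \<beta>. if_param \<alpha> \<beta>}"

definition ifpoint_set :: "('a \<Rightarrow> real) \<Rightarrow> ('a \<Rightarrow> real) \<Rightarrow> ('a \<Rightarrow> real \<times> real) set" where
  "ifpoint_set \<mu> \<nu> = {ifpoint x \<alpha> \<beta> | x \<alpha> \<beta>. if_param \<alpha> \<beta> \<and> \<mu> x \<ge> \<alpha> \<and> \<nu> x \<le> \<beta>}"

definition ifpoint_comp :: "('a::semigroup_mult \<Rightarrow> real \<times> real) set \<Rightarrow> ('a \<Rightarrow> real \<times> real) set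
    \<Rightarrow> ('a \<Rightarrow> real \<times> real) set" where
  "ifpoint_comp X Y = {ifpoint (x * y) (min \<alpha> \<gamma>) (max \<beta> \<delta>) | x \<alpha> \<beta> y \<gamma> \<delta>.
      if_param \<alpha> \<beta> \<and> if_param \<gamma> \<delta> \<and> ifpoint x \<alpha> \<beta> \<in> X \<and> ifpoint y \<gamma> \<delta> \<in> Y}"

end

theory Submission
  imports Defs
begin

(* All points x_(0,1) coincide, while a point x_(a,b) with (a,b) \<noteq> (0,1) determines
   x, a and b; so such a point lies in underline A exactly when a \<le> \<mu>A x and \<nu>A x \<le> b.

   (i) \<Longrightarrow> (ii): for a nondegenerate point x_(a,b) in both sets write
   x = (c x)(x d) with x = c x\<^sup>2 d; the left ideal A contains (c x)_(a,b), the right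
   ideal B contains (x d)_(a,b), and their product is x_(a,b).  The degenerate point
   x_(0,1) is the product of x_(0,1) with itself.

   (ii) \<Longrightarrow> (i): apply (ii) to the characteristic IF subsets of the principal left ideal
   L(x) = {x} \<union> S x and principal right ideal R(x) = {x} \<union> x S.  The point x_(1,0) lies
   in both, so it is a product u_(1,b) \<circ> v_(1,d) with u \<in> L(x), v \<in> R(x) and x = u v;
   a purely semigroup-theoretic lemma then yields x = a x\<^sup>2 b. *)

lemma ifpoint_degenerate: "ifpoint x 0 1 = ifpoint y 0 1"
  by (simp add: ifpoint_def fun_eq_iff)

lemma ifpoint_eqD:
  assumes "ifpoint x a b = ifpoint y c d" and "(a, b) \<noteq> (0, 1)"
  shows "x = y \<and> a = c \<and> b = d"
proof -
  from fun_cong[OF assms(1), of x]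
  have "(a, b) = (if x = y then (c, d) else (0, 1))" by (simp add: ifpoint_def)
  with assms(2) show ?thesis by (auto split: if_splits)
qed

lemma ifpoint_in_ifpoint_set_iff:
  assumes "if_param a b" and "(a, b) \<noteq> (0, 1)"
  shows "ifpoint x a b \<in> ifpoint_set \<mu> \<nu> \<longleftrightarrow> a \<le> \<mu> x \<and> \<nu> x \<le> b"
  using assms ifpoint_eqD[of x a b] unfolding ifpoint_set_def by blast

lemma ifpoint_degenerate_in_ifpoint_set:
  assumes "if_subset \<mu> \<nu>"
  shows "ifpoint x 0 1 \<in> ifpoint_set \<mu> \<nu>"
  using assms unfolding ifpoint_set_def if_subset_def if_param_def by fastforce

lemma ifpoint_compI:
  assumes "ifpoint x a b \<in> X" "ifpoint y c d \<in> Y" "if_param a b" "if_param c d"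
  shows "ifpoint (x * y) (min a c) (max b d) \<in> ifpoint_comp X Y"
  using assms unfolding ifpoint_comp_def by blast

lemma if_left_ideal_point_mult:
  assumes "if_left_ideal \<mu> \<nu>" "if_param a b" "a \<le> \<mu> x" "\<nu> x \<le> b"
  shows "ifpoint (s * x) a b \<in> ifpoint_set \<mu> \<nu>"
proof -
  have "a \<le> \<mu> (s * x)" "\<nu> (s * x) \<le> b"
    using assms unfolding if_left_ideal_def by (meson order_trans)+
  with assms(2) show ?thesis unfolding ifpoint_set_def by blast
qed

lemma if_right_ideal_point_mult:
  assumes "if_right_ideal \<mu> \<nu>" "if_param a b" "a \<le> \<mu> x" "\<nu> x \<le> b"
  shows "ifpoint (x * s) a b \<in> ifpoint_set \<mu> \<nu>"
proof -
  have "a \<le> \<mu> (x * s)" "\<nu> (x * s) \<le> b"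
    using assms unfolding if_right_ideal_def by (meson order_trans)+
  with assms(2) show ?thesis unfolding ifpoint_set_def by blast
qed

definition char_mem :: "'a set \<Rightarrow> 'a \<Rightarrow> real" where
  "char_mem L = (\<lambda>z. if z \<in> L then 1 else 0)"

definition char_nonmem :: "'a set \<Rightarrow> 'a \<Rightarrow> real" where
  "char_nonmem L = (\<lambda>z. if z \<in> L then 0 else 1)"

lemma if_left_ideal_char:
  assumes "\<And>s z. z \<in> L \<Longrightarrow> s * z \<in> L"
  shows "if_left_ideal (char_mem L) (char_nonmem L)"
  using assms unfolding if_left_ideal_def if_subset_def char_mem_def char_nonmem_def by auto

lemma if_right_ideal_char:
  assumes "\<And>s z. z \<in> L \<Longrightarrow> z * s \<in> L"
  shows "if_right_ideal (char_mem L) (char_nonmem L)"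
  using assms unfolding if_right_ideal_def if_subset_def char_mem_def char_nonmem_def by auto

lemma ifpoint_in_char_iff:
  assumes "if_param 1 b"
  shows "ifpoint x 1 b \<in> ifpoint_set (char_mem L) (char_nonmem L) \<longleftrightarrow> x \<in> L"
  using assms ifpoint_in_ifpoint_set_iff[of 1 b x]
  by (auto simp: char_mem_def char_nonmem_def if_param_def)

definition left_principal :: "'a::semigroup_mult \<Rightarrow> 'a set" where
  "left_principal x = insert x (range (\<lambda>s. s * x))"

definition right_principal :: "'a::semigroup_mult \<Rightarrow> 'a set" where
  "right_principal x = insert x (range (\<lambda>s. x * s))"

lemma left_principal_mult: "z \<in> left_principal x \<Longrightarrow> s * z \<in> left_principal x"
  unfolding left_principal_def by (auto simp: mult.assoc[symmetric])

lemma right_principal_mult: "z \<in> right_principal x \<Longrightarrow> z * s \<in> right_principal x"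
  unfolding right_principal_def by (auto simp: mult.assoc)

text \<open>If x \<in> L(x) R(x), then x = a x x b: when u = x or v = x this follows by
  substituting the equation x = u v into itself.\<close>
lemma intra_regular_element:
  fixes x :: "'a::semigroup_mult"
  assumes "x = u * v" "u \<in> left_principal x" "v \<in> right_principal x"
  shows "\<exists>a b. x = a * (x * x) * b"
proof -
  from assms(2,3) consider "u = x" "v = x" | s where "u = x" "v = x * s"
    | s where "u = s * x" "v = x" | s t where "u = s * x" "v = x * t"
    unfolding left_principal_def right_principal_def by blast
  then show ?thesis
  proof cases
    case 1
    have idem: "x = x * x" using assms(1) unfolding 1 .
    have "x * (x * x) * x = (x * x) * (x * x)" by (simp add: mult.assoc)
    also have "\<dots> = x" using idem[symmetric] by simp
    finally have "x = x * (x * x) * x" by (rule sym)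
    then show ?thesis by blast
  next
    case (2 s)
    have h: "x = x * x * s" using assms(1) unfolding 2 by (simp only: mult.assoc)
    have "x * (x * x * s) * s = x" using h[symmetric] by simp
    then have "x = x * (x * x) * (s * s)" by (simp add: mult.assoc)
    then show ?thesis by blast
  next
    case (3 s)
    have h: "x = s * x * x" using assms(1) unfolding 3 by (simp only: mult.assoc)
    have "s * (s * x * x) * x = x" using h[symmetric] by simp
    then have "x = (s * s) * (x * x) * x" by (simp add: mult.assoc)
    then show ?thesis by blast
  next
    case (4 s t)
    have "x = s * (x * x) * t" using assms(1) unfolding 4 by (simp only: mult.assoc)
    then show ?thesis by blast
  qed
qed

lemma intra_regular_imp_inter_subset_comp:
  fixes \<mu>A \<nu>A \<mu>B \<nu>B :: "'a::semigroup_mult \<Rightarrow> real"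
  assumes ir: "intra_regular TYPE('a)"
    and A: "if_left_ideal \<mu>A \<nu>A" and B: "if_right_ideal \<mu>B \<nu>B"
    and p: "p \<in> ifpoint_set \<mu>A \<nu>A \<inter> ifpoint_set \<mu>B \<nu>B"
  shows "p \<in> ifpoint_comp (ifpoint_set \<mu>A \<nu>A) (ifpoint_set \<mu>B \<nu>B)"
proof -
  from p obtain x a b where p_def: "p = ifpoint x a b" and ab: "if_param a b"
    and inA: "a \<le> \<mu>A x" "\<nu>A x \<le> b" unfolding ifpoint_set_def by blast
  show ?thesis
  proof (cases "(a, b) = (0, 1)")
    case True
    have "ifpoint x 0 1 \<in> ifpoint_set \<mu>A \<nu>A" "ifpoint x 0 1 \<in> ifpoint_set \<mu>B \<nu>B"
      using A B by (auto simp: if_left_ideal_def if_right_ideal_def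
          intro: ifpoint_degenerate_in_ifpoint_set)
    then have "ifpoint (x * x) (min 0 0) (max 1 1) \<in> ifpoint_comp (ifpoint_set \<mu>A \<nu>A) (ifpoint_set \<mu>B \<nu>B)"
      by (intro ifpoint_compI) (auto simp: if_param_def)
    then show ?thesis using True p_def ifpoint_degenerate[of "x * x" x] by simp
  next
    case False
    have "ifpoint x a b \<in> ifpoint_set \<mu>B \<nu>B" using p p_def by simp
    then have inB: "a \<le> \<mu>B x" "\<nu>B x \<le> b"
      by (simp_all add: ifpoint_in_ifpoint_set_iff[OF ab False])
    from ir obtain c d where "x = c * (x * x) * d" unfolding intra_regular_def by blast
    then have x_fact: "x = (c * x) * (x * d)" by (simp add: mult.assoc)
    have "ifpoint (c * x) a b \<in> ifpoint_set \<mu>A \<nu>A"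
      using if_left_ideal_point_mult[OF A ab inA] .
    moreover have "ifpoint (x * d) a b \<in> ifpoint_set \<mu>B \<nu>B"
      using if_right_ideal_point_mult[OF B ab inB] .
    ultimately have "ifpoint ((c * x) * (x * d)) (min a a) (max b b)
        \<in> ifpoint_comp (ifpoint_set \<mu>A \<nu>A) (ifpoint_set \<mu>B \<nu>B)"
      using ab by (intro ifpoint_compI)
    then show ?thesis using p_def x_fact by simp
  qed
qed

lemma inter_subset_comp_imp_intra_regular_element:
  fixes x :: "'a::semigroup_mult"
  defines "\<mu>A \<equiv> char_mem (left_principal x)" and "\<nu>A \<equiv> char_nonmem (left_principal x)"
    and "\<mu>B \<equiv> char_mem (right_principal x)" and "\<nu>B \<equiv> char_nonmem (right_principal x)"
  assumes sub: "ifpoint_set \<mu>A \<nu>A \<inter> ifpoint_set \<mu>B \<nu>B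
      \<subseteq> ifpoint_comp (ifpoint_set \<mu>A \<nu>A) (ifpoint_set \<mu>B \<nu>B)"
  shows "\<exists>a b. x = a * (x * x) * b"
proof -
  have full: "if_param 1 0" by (simp add: if_param_def)
  have "ifpoint x 1 0 \<in> ifpoint_set \<mu>A \<nu>A \<inter> ifpoint_set \<mu>B \<nu>B"
    unfolding assms(1-4)
    by (simp add: ifpoint_in_char_iff[OF full] left_principal_def right_principal_def)
  with sub obtain u a b v c d where
    eq: "ifpoint x 1 0 = ifpoint (u * v) (min a c) (max b d)"
    and ab: "if_param a b" and cd: "if_param c d"
    and u: "ifpoint u a b \<in> ifpoint_set \<mu>A \<nu>A" and v: "ifpoint v c d \<in> ifpoint_set \<mu>B \<nu>B"
    unfolding ifpoint_comp_def by blast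
  from ifpoint_eqD[OF eq] have x_eq: "x = u * v" and "min a c = 1" by auto
  with ab cd have "a = 1" "c = 1" by (auto simp: if_param_def)
  with u v ab cd have "u \<in> left_principal x" "v \<in> right_principal x"
    unfolding assms(1-4) by (simp_all add: ifpoint_in_char_iff)
  with x_eq show ?thesis by (rule intra_regular_element)
qed

theorem theorem3p14:
  shows "intra_regular TYPE('a::semigroup_mult) \<longleftrightarrow>
    (\<forall>(\<mu>A::'a \<Rightarrow> real) \<nu>A \<mu>B \<nu>B. if_left_ideal \<mu>A \<nu>A \<longrightarrow> if_right_ideal \<mu>B \<nu>B \<longrightarrow>
       ifpoint_set \<mu>A \<nu>A \<inter> ifpoint_set \<mu>B \<nu>B
         \<subseteq> ifpoint_comp (ifpoint_set \<mu>A \<nu>A) (ifpoint_set \<mu>B \<nu>B))"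
proof
  assume "intra_regular TYPE('a)"
  then show "\<forall>(\<mu>A::'a \<Rightarrow> real) \<nu>A \<mu>B \<nu>B. if_left_ideal \<mu>A \<nu>A \<longrightarrow> if_right_ideal \<mu>B \<nu>B \<longrightarrow>
       ifpoint_set \<mu>A \<nu>A \<inter> ifpoint_set \<mu>B \<nu>B
         \<subseteq> ifpoint_comp (ifpoint_set \<mu>A \<nu>A) (ifpoint_set \<mu>B \<nu>B)"
    using intra_regular_imp_inter_subset_comp by blast
next
  assume H: "\<forall>(\<mu>A::'a \<Rightarrow> real) \<nu>A \<mu>B \<nu>B. if_left_ideal \<mu>A \<nu>A \<longrightarrow> if_right_ideal \<mu>B \<nu>B \<longrightarrow>
       ifpoint_set \<mu>A \<nu>A \<inter> ifpoint_set \<mu>B \<nu>B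
         \<subseteq> ifpoint_comp (ifpoint_set \<mu>A \<nu>A) (ifpoint_set \<mu>B \<nu>B)"
  show "intra_regular TYPE('a)" unfolding intra_regular_def
  proof
    fix x :: 'a
    have "if_left_ideal (char_mem (left_principal x)) (char_nonmem (left_principal x))"
      by (rule if_left_ideal_char) (rule left_principal_mult)
    moreover have "if_right_ideal (char_mem (right_principal x)) (char_nonmem (right_principal x))"
      by (rule if_right_ideal_char) (rule right_principal_mult)
    ultimately show "\<exists>a b. x = a * (x * x) * b"
      using H by (intro inter_subset_comp_imp_intra_regular_element) blast
  qed
qed

end
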